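(* Assume the Nested Logit model with outside option described in the context satisfies Assumptions 1 and 2, and let $S \in \mathcal{S}$. Then for every $i \in S$: (I) if $N(i) \subseteq S$, then $\mathsf{BF}(i,S) = \mathsf{BF}(0,S)$; (II) if $N(i) \not\subseteq S$, then $\mathsf{BF}(i,S) > \mathsf{BF}(0,S)$, and moreover for every $j \in S \setminus \{i\}$ we have $N(i) = N(j)$ if and only if $\mathsf{BF}(i,S) = \mathsf{BF}(j,S)$. Consequently: (a) if $i \in S$ and $\mathsf{BF}(i,S) = \mathsf{BF}(0,S)$, then $N(i) \neq N(k)$ for all $k \notin S$; (b) if $i,j \in S$ and $\mathsf{BF}(i,S) = \mathsf{BF}(j,S) > \mathsf{BF}(0,S)$, then $N(i) = N(j)$; (c) if $i,j \in S$ and $\mathsf{BF}(i,S) \neq \mathsf{BF}(j,S)$, then $N(i) \neq N(j)$.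
   Context: Items: $[n]=\{1,\dots,n\}$ with $n\ge 2$. Experiment design: fix an integer base $b \ge 2$, let $L = \lceil \log_b n \rceil$, and fix an injective map $\sigma: [n] \to \{0,\dots,b-1\}^L$, writing $\sigma_\ell(i)$ for its $\ell$-th coordinate. For $\ell \in \{1,\dots,L\}$ and $d \in \{0,\dots,b-1\}$ let $S_{\ell,-d} = \{i \in [n] : \sigma_\ell(i) \neq d\}$, and let $\mathcal{S} = \{S_{\ell,-d}\}_{\ell,d}$ (the experimental assortments); the control assortment $[n]$ is also offered. Nested Logit model with outside option: $\mathcal{N}$ is a partition of $[n]$ into nonempty disjoint nests; $N(i)$ denotes the nest containing $i$. Each item has a weight $v_i > 0$, each nest $N$ a parameter $\lambda_N \in [0,1]$, and each nest with $\lambda_N = 0$ an additional weight $v_N > 0$. For $S \subseteq [n]$ set $v_N(S) = (\sum_{i \in N \cap S} v_i)^{\lambda_N}$ if $\lambda_N \in (0,1]$ and $v_N(S) = v_N \mathbf{1}(N \cap S \neq \emptyset)$ if $\lambda_N = 0$. For $i \in S$, $\phi(i,S) = \frac{v_{N(i)}(S)}{1 + \sum_{N \in \mathcal{N}} v_N(S)} \cdot \frac{v_i}{\sum_{j \in N(i) \cap S} v_j}$, and the outside option $0$ has $\phi(0,S) = \frac{1}{1 + \sum_{N \in \mathcal{N}} v_N(S)}$. Boost factor: for $S \in \mathcal{S}$ and $i \in S \cup \{0\}$, $\mathsf{BF}(i,S) = \phi(i,S)/\phi(i,[n])$. Multiplier: $\mathsf{Mult}(N,S) = \left(\frac{\sum_{j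 \in N} v_j}{\sum_{j \in N \cap S} v_j}\right)^{1-\lambda_N}$. Assumption 1: $\lambda_N = 1$ if and only if $|N| = 1$. Assumption 2: for every $S \in \mathcal{S}$ and every two distinct nests $N \neq N'$ with $\emptyset \neq N \cap S \neq N$ and $\emptyset \neq N' \cap S \neq N'$, we have $\mathsf{Mult}(N,S) \neq \mathsf{Mult}(N',S)$. *)

theory Defs
  imports Complex_Main
begin

definition items :: "nat \<Rightarrow> nat set" where
  "items n = {1..n}"

text \<open>Experiment design: base b, L = ceiling of log_b n, sigma i l is the l-th digit of item i.\<close>

definition design_L :: "nat \<Rightarrow> nat \<Rightarrow> nat" where
  "design_L n b = nat \<lceil>log (real b) (real n)\<rceil>"

definition valid_design :: "nat \<Rightarrow> nat \<Rightarrow> (nat \<Rightarrow> nat \<Rightarrow> nat) \<Rightarrow> bool" where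
  "valid_design n b \<sigma> \<longleftrightarrow> b \<ge> 2
     \<and> (\<forall>i\<in>items n. \<forall>l\<in>{1..design_L n b}. \<sigma> i l < b)
     \<and> (\<forall>i\<in>items n. \<forall>j\<in>items n.
           (\<forall>l\<in>{1..design_L n b}. \<sigma> i l = \<sigma> j l) \<longrightarrow> i = j)"

definition S_minus :: "nat \<Rightarrow> (nat \<Rightarrow> nat \<Rightarrow> nat) \<Rightarrow> nat \<Rightarrow> nat \<Rightarrow> nat set" where
  "S_minus n \<sigma> l d = {i \<in> items n. \<sigma> i l \<noteq> d}"

definition exp_assortments :: "nat \<Rightarrow> nat \<Rightarrow> (nat \<Rightarrow> nat \<Rightarrow> nat) \<Rightarrow> nat set set" where
  "exp_assortments n b \<sigma> =
     {S_minus n \<sigma> l d | l d. l \<in> {1..design_L n b} \<and> d < b}"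

definition is_partition :: "nat \<Rightarrow> nat set set \<Rightarrow> bool" where
  "is_partition n \<N> \<longleftrightarrow> \<Union>\<N> = items n \<and> {} \<notin> \<N>
     \<and> (\<forall>A\<in>\<N>. \<forall>B\<in>\<N>. A \<noteq> B \<longrightarrow> A \<inter> B = {})"

definition nest_of :: "nat set set \<Rightarrow> nat \<Rightarrow> nat set" where
  "nest_of \<N> i = (THE N. N \<in> \<N> \<and> i \<in> N)"

definition NL_model :: "nat \<Rightarrow> nat set set \<Rightarrow> (nat \<Rightarrow> real) \<Rightarrow> (nat set \<Rightarrow> real)
    \<Rightarrow> (nat set \<Rightarrow> real) \<Rightarrow> bool" where
  "NL_model n \<N> v lam vN \<longleftrightarrow> is_partition n \<N>
     \<and> (\<forall>i\<in>items n. v i > 0)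
     \<and> (\<forall>N\<in>\<N>. 0 \<le> lam N \<and> lam N \<le> 1)
     \<and> (\<forall>N\<in>\<N>. lam N = 0 \<longrightarrow> vN N > 0)"

definition nest_weight :: "(nat \<Rightarrow> real) \<Rightarrow> (nat set \<Rightarrow> real) \<Rightarrow> (nat set \<Rightarrow> real)
    \<Rightarrow> nat set \<Rightarrow> nat set \<Rightarrow> real" where
  "nest_weight v lam vN N S =
     (if lam N = 0 then (if N \<inter> S \<noteq> {} then vN N else 0)
      else (\<Sum>j\<in>N \<inter> S. v j) powr (lam N))"

definition NL_denom :: "nat set set \<Rightarrow> (nat \<Rightarrow> real) \<Rightarrow> (nat set \<Rightarrow> real) \<Rightarrow> (nat set \<Rightarrow> real)
    \<Rightarrow> nat set \<Rightarrow> real" where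
  "NL_denom \<N> v lam vN S = 1 + (\<Sum>N\<in>\<N>. nest_weight v lam vN N S)"

definition phi :: "nat set set \<Rightarrow> (nat \<Rightarrow> real) \<Rightarrow> (nat set \<Rightarrow> real) \<Rightarrow> (nat set \<Rightarrow> real)
    \<Rightarrow> nat \<Rightarrow> nat set \<Rightarrow> real" where
  "phi \<N> v lam vN i S =
     nest_weight v lam vN (nest_of \<N> i) S / NL_denom \<N> v lam vN S
       * (v i / (\<Sum>j\<in>nest_of \<N> i \<inter> S. v j))"

definition phi0 :: "nat set set \<Rightarrow> (nat \<Rightarrow> real) \<Rightarrow> (nat set \<Rightarrow> real) \<Rightarrow> (nat set \<Rightarrow> real)
    \<Rightarrow> nat set \<Rightarrow> real" where
  "phi0 \<N> v lam vN S = 1 / NL_denom \<N> v lam vN S"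

definition BF :: "nat \<Rightarrow> nat set set \<Rightarrow> (nat \<Rightarrow> real) \<Rightarrow> (nat set \<Rightarrow> real) \<Rightarrow> (nat set \<Rightarrow> real)
    \<Rightarrow> nat \<Rightarrow> nat set \<Rightarrow> real" where
  "BF n \<N> v lam vN i S = phi \<N> v lam vN i S / phi \<N> v lam vN i (items n)"

definition BF0 :: "nat \<Rightarrow> nat set set \<Rightarrow> (nat \<Rightarrow> real) \<Rightarrow> (nat set \<Rightarrow> real) \<Rightarrow> (nat set \<Rightarrow> real)
    \<Rightarrow> nat set \<Rightarrow> real" where
  "BF0 n \<N> v lam vN S = phi0 \<N> v lam vN S / phi0 \<N> v lam vN (items n)"

definition Mult :: "(nat \<Rightarrow> real) \<Rightarrow> (nat set \<Rightarrow> real) \<Rightarrow> nat set \<Rightarrow> nat set \<Rightarrow> real" where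
  "Mult v lam N S = ((\<Sum>j\<in>N. v j) / (\<Sum>j\<in>N \<inter> S. v j)) powr (1 - lam N)"

definition assumption1 :: "nat set set \<Rightarrow> (nat set \<Rightarrow> real) \<Rightarrow> bool" where
  "assumption1 \<N> lam \<longleftrightarrow> (\<forall>N\<in>\<N>. lam N = 1 \<longleftrightarrow> card N = 1)"

definition assumption2 :: "nat \<Rightarrow> nat \<Rightarrow> (nat \<Rightarrow> nat \<Rightarrow> nat) \<Rightarrow> nat set set \<Rightarrow> (nat \<Rightarrow> real)
    \<Rightarrow> (nat set \<Rightarrow> real) \<Rightarrow> bool" where
  "assumption2 n b \<sigma> \<N> v lam \<longleftrightarrow>
     (\<forall>S\<in>exp_assortments n b \<sigma>. \<forall>N\<in>\<N>. \<forall>N'\<in>\<N>.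
        N \<noteq> N' \<and> N \<inter> S \<noteq> {} \<and> N \<inter> S \<noteq> N \<and> N' \<inter> S \<noteq> {} \<and> N' \<inter> S \<noteq> N'
        \<longrightarrow> Mult v lam N S \<noteq> Mult v lam N' S)"

end

theory Submission
  imports Defs
begin

text \<open>Dividing \<open>\<phi>(i,S)\<close> by \<open>\<phi>(i,[n])\<close> cancels \<open>v\<^sub>i\<close> and the nest constants and leaves
  \<open>BF(i,S) = Mult(N(i),S) \<cdot> BF(0,S)\<close>. The multiplier is \<open>1\<close> for a nest contained in \<open>S\<close>;
  for a nest cut by \<open>S\<close> the nest has at least two items, so \<open>\<lambda> < 1\<close> by Assumption 1 and the
  multiplier exceeds \<open>1\<close>. Assumption 2 says that the multiplier separates the cut nests,
  so equal boost factors above \<open>BF(0,S)\<close> identify the nest.\<close>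

lemma nest_of_eq:
  assumes "is_partition n \<N>" "N \<in> \<N>" "i \<in> N"
  shows "nest_of \<N> i = N"
  unfolding nest_of_def
proof (rule the_equality)
  fix M assume "M \<in> \<N> \<and> i \<in> M"
  with assms show "M = N" unfolding is_partition_def by blast
qed (use assms in blast)

lemma
  assumes "is_partition n \<N>" "i \<in> items n"
  shows nest_of_mem: "nest_of \<N> i \<in> \<N>" and mem_nest_of: "i \<in> nest_of \<N> i"
proof -
  obtain N where "N \<in> \<N>" "i \<in> N"
    using assms unfolding is_partition_def by blast
  with nest_of_eq[OF assms(1)] show "nest_of \<N> i \<in> \<N>" "i \<in> nest_of \<N> i" by simp_all
qed

lemma
  assumes "is_partition n \<N>" "N \<in> \<N>"
  shows partition_nest_subset: "N \<subseteq> items n" and partition_nest_finite: "finite N"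
proof -
  show "N \<subseteq> items n" using assms unfolding is_partition_def by blast
  then show "finite N" unfolding items_def using finite_subset by blast
qed

lemma NL_model_is_partition: "NL_model n \<N> v lam vN \<Longrightarrow> is_partition n \<N>"
  unfolding NL_model_def by simp

lemma NL_model_nest_sum_pos:
  assumes "NL_model n \<N> v lam vN" "N \<in> \<N>" "i \<in> N \<inter> T"
  shows "(\<Sum>j\<in>N \<inter> T. v j) > 0"
proof (rule sum_pos2)
  have "N \<subseteq> items n" "finite N"
    using partition_nest_subset partition_nest_finite NL_model_is_partition[OF assms(1)] assms(2)
    by blast+
  then show "finite (N \<inter> T)" "\<And>j. j \<in> N \<inter> T \<Longrightarrow> 0 \<le> v j" "0 < v i"
    using assms unfolding NL_model_def by (auto intro: less_imp_le)
qed (use assms(3) in blast)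

lemma NL_denom_pos:
  assumes "NL_model n \<N> v lam vN"
  shows "NL_denom \<N> v lam vN S > 0"
proof -
  have "nest_weight v lam vN N S \<ge> 0" if "N \<in> \<N>" for N
    using assms that unfolding NL_model_def nest_weight_def by (auto intro: less_imp_le)
  then have "(\<Sum>N\<in>\<N>. nest_weight v lam vN N S) \<ge> 0" by (rule sum_nonneg)
  then show ?thesis unfolding NL_denom_def by linarith
qed

lemma BF0_pos:
  assumes "NL_model n \<N> v lam vN"
  shows "BF0 n \<N> v lam vN S > 0"
  unfolding BF0_def phi0_def using NL_denom_pos[OF assms] by simp

text \<open>Both cases of \<open>nest_weight\<close> share the shape \<open>c\<^sub>N \<cdot> A powr \<lambda>\<^sub>N\<close>, because
  \<open>A powr 0 = 1\<close> for \<open>A > 0\<close>.\<close>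

lemma phi_eq_powr:
  assumes model: "NL_model n \<N> v lam vN" and "S \<subseteq> items n" "i \<in> S"
  defines "N \<equiv> nest_of \<N> i"
  shows "phi \<N> v lam vN i S = (if lam N = 0 then vN N else 1) * v i
           * (\<Sum>j\<in>N \<inter> S. v j) powr (lam N - 1) / NL_denom \<N> v lam vN S"
proof -
  have "i \<in> items n" using assms by blast
  then have N: "N \<in> \<N>" "i \<in> N"
    using nest_of_mem mem_nest_of NL_model_is_partition[OF model] N_def by auto
  have A: "(\<Sum>j\<in>N \<inter> S. v j) > 0"
    using NL_model_nest_sum_pos[OF model N(1)] N(2) \<open>i \<in> S\<close> by blast
  show ?thesis
    using N(2) \<open>i \<in> S\<close> A
    unfolding phi_def nest_weight_def N_def[symmetric]
    by (auto simp: powr_diff powr_minus_divide field_simps)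
qed

lemma BF_eq_Mult_times_BF0:
  assumes model: "NL_model n \<N> v lam vN" and S: "S \<subseteq> items n" and "i \<in> S"
  shows "BF n \<N> v lam vN i S = Mult v lam (nest_of \<N> i) S * BF0 n \<N> v lam vN S"
proof -
  define N where "N = nest_of \<N> i"
  define c where "c = (if lam N = 0 then vN N else 1)"
  define A where "A = (\<Sum>j\<in>N \<inter> S. v j)"
  define V where "V = (\<Sum>j\<in>N. v j)"
  have partition: "is_partition n \<N>" using NL_model_is_partition[OF model] .
  have "i \<in> items n" using assms by blast
  then have N: "N \<in> \<N>" "i \<in> N" using nest_of_mem mem_nest_of partition N_def by auto
  have N_items: "N \<inter> items n = N" using partition_nest_subset[OF partition N(1)] by blast
  have "A > 0" unfolding A_def using NL_model_nest_sum_pos[OF model N(1)] N(2) \<open>i \<in> S\<close> by blast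
  moreover have "V > 0"
    unfolding V_def using NL_model_nest_sum_pos[OF model N(1), of i UNIV] N(2) by simp
  moreover have "c > 0" using model N(1) unfolding c_def NL_model_def by auto
  moreover have "v i > 0" using model N(2) \<open>i \<in> items n\<close> unfolding NL_model_def by blast
  moreover note NL_denom_pos[OF model]
  moreover have "phi \<N> v lam vN i S = c * v i * A powr (lam N - 1) / NL_denom \<N> v lam vN S"
    using phi_eq_powr[OF model S \<open>i \<in> S\<close>] unfolding c_def A_def N_def .
  moreover have "phi \<N> v lam vN i (items n)
      = c * v i * V powr (lam N - 1) / NL_denom \<N> v lam vN (items n)"
    using phi_eq_powr[OF model order.refl \<open>i \<in> items n\<close>] N_items
    unfolding c_def V_def N_def by simp
  moreover have "A powr (lam N - 1) / V powr (lam N - 1) = (V / A) powr (1 - lam N)"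
    using \<open>A > 0\<close> \<open>V > 0\<close> by (simp add: powr_divide powr_diff powr_minus_divide field_simps)
  ultimately show ?thesis
    unfolding BF_def BF0_def phi0_def Mult_def N_def[symmetric] A_def[symmetric] V_def[symmetric]
    by (simp add: field_simps)
qed

lemma Mult_eq_1_if_subset:
  assumes "N \<subseteq> S" "(\<Sum>j\<in>N. v j) \<noteq> 0"
  shows "Mult v lam N S = 1"
proof -
  have "N \<inter> S = N" using assms(1) by blast
  with assms(2) show ?thesis unfolding Mult_def by simp
qed

lemma Mult_gt_1_if_cut:
  assumes "finite N" "\<forall>j\<in>N. v j > 0" "N \<inter> S \<noteq> {}" "\<not> N \<subseteq> S" "lam N < 1"
  shows "Mult v lam N S > 1"
proof -
  have inside: "(\<Sum>j\<in>N \<inter> S. v j) > 0" using assms(1-3) by (intro sum_pos) auto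
  have outside: "(\<Sum>j\<in>N - S. v j) > 0" using assms(1,2,4) by (intro sum_pos) auto
  have "(\<Sum>j\<in>N. v j) = (\<Sum>j\<in>N \<inter> S. v j) + (\<Sum>j\<in>N - S. v j)"
    using assms(1) by (metis sum.Int_Diff)
  with inside outside have "(\<Sum>j\<in>N. v j) / (\<Sum>j\<in>N \<inter> S. v j) > 1" by simp
  with assms(5) show ?thesis unfolding Mult_def by (simp add: powr_less_mono[of 0, simplified])
qed

lemma assumption1_lam_less_1:
  assumes "assumption1 \<N> lam" "N \<in> \<N>" "lam N \<le> 1" "i \<in> N" "k \<in> N" "i \<noteq> k"
  shows "lam N < 1"
proof -
  have "card N \<noteq> 1" using assms(4-6) by (auto simp: card_Suc_eq)
  with assms(1-3) show ?thesis unfolding assumption1_def by force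
qed

definition Mult_separates_cut_nests ::
    "nat set set \<Rightarrow> (nat \<Rightarrow> real) \<Rightarrow> (nat set \<Rightarrow> real) \<Rightarrow> nat set \<Rightarrow> bool" where
  "Mult_separates_cut_nests \<N> v lam S \<longleftrightarrow>
     (\<forall>N\<in>\<N>. \<forall>N'\<in>\<N>. N \<noteq> N' \<and> N \<inter> S \<noteq> {} \<and> \<not> N \<subseteq> S \<and> N' \<inter> S \<noteq> {} \<and> \<not> N' \<subseteq> S
        \<longrightarrow> Mult v lam N S \<noteq> Mult v lam N' S)"

lemma assumption2_Mult_separates_cut_nests:
  assumes "assumption2 n b \<sigma> \<N> v lam" "S \<in> exp_assortments n b \<sigma>"
  shows "Mult_separates_cut_nests \<N> v lam S"
  using assms unfolding assumption2_def Mult_separates_cut_nests_def by blast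

lemma BF_eq_BF0_if_nest_subset:
  assumes model: "NL_model n \<N> v lam vN" and S: "S \<subseteq> items n" and "i \<in> S"
    and "nest_of \<N> i \<subseteq> S"
  shows "BF n \<N> v lam vN i S = BF0 n \<N> v lam vN S"
proof -
  define N where "N = nest_of \<N> i"
  have N: "N \<in> \<N>" "i \<in> N"
    using nest_of_mem mem_nest_of NL_model_is_partition[OF model] N_def S \<open>i \<in> S\<close> by auto
  have "(\<Sum>j\<in>N. v j) > 0" using NL_model_nest_sum_pos[OF model N(1), of i UNIV] N(2) by simp
  then have "Mult v lam N S = 1" using Mult_eq_1_if_subset assms(4) N_def by simp
  then show ?thesis using BF_eq_Mult_times_BF0[OF model S \<open>i \<in> S\<close>] N_def by simp
qed

lemma BF0_less_BF_if_nest_cut: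
  assumes model: "NL_model n \<N> v lam vN" and A1: "assumption1 \<N> lam"
    and S: "S \<subseteq> items n" and "i \<in> S" and cut: "\<not> nest_of \<N> i \<subseteq> S"
  shows "BF0 n \<N> v lam vN S < BF n \<N> v lam vN i S"
proof -
  define N where "N = nest_of \<N> i"
  have partition: "is_partition n \<N>" using NL_model_is_partition[OF model] .
  have N: "N \<in> \<N>" "i \<in> N" using nest_of_mem mem_nest_of partition N_def S \<open>i \<in> S\<close> by auto
  obtain k where "k \<in> N" "k \<notin> S" using cut N_def by blast
  moreover have "lam N \<le> 1" using model N(1) unfolding NL_model_def by blast
  ultimately have "lam N < 1"
    using assumption1_lam_less_1[OF A1 N(1) _ N(2)] \<open>i \<in> S\<close> by blast
  moreover have "\<forall>j\<in>N. v j > 0"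
    using model partition_nest_subset[OF partition N(1)] unfolding NL_model_def by blast
  ultimately have "Mult v lam N S > 1"
    using Mult_gt_1_if_cut[OF partition_nest_finite[OF partition N(1)]] N(2) \<open>i \<in> S\<close> cut N_def
    by blast
  then show ?thesis
    using BF_eq_Mult_times_BF0[OF model S \<open>i \<in> S\<close>] BF0_pos[OF model] N_def by simp
qed

lemma same_nest_iff_BF_eq:
  assumes model: "NL_model n \<N> v lam vN" and A1: "assumption1 \<N> lam"
    and sep: "Mult_separates_cut_nests \<N> v lam S"
    and S: "S \<subseteq> items n" and "i \<in> S" "j \<in> S" and cut: "\<not> nest_of \<N> i \<subseteq> S"
  shows "nest_of \<N> i = nest_of \<N> j \<longleftrightarrow> BF n \<N> v lam vN i S = BF n \<N> v lam vN j S"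
proof
  assume "nest_of \<N> i = nest_of \<N> j"
  then show "BF n \<N> v lam vN i S = BF n \<N> v lam vN j S"
    using BF_eq_Mult_times_BF0[OF model S] \<open>i \<in> S\<close> \<open>j \<in> S\<close> by simp
next
  assume BF_eq: "BF n \<N> v lam vN i S = BF n \<N> v lam vN j S"
  moreover have "BF0 n \<N> v lam vN S \<noteq> 0" using BF0_pos[OF model, of S] by simp
  ultimately have Mult_eq: "Mult v lam (nest_of \<N> i) S = Mult v lam (nest_of \<N> j) S"
    by (simp add: BF_eq_Mult_times_BF0[OF model S \<open>i \<in> S\<close>] BF_eq_Mult_times_BF0[OF model S \<open>j \<in> S\<close>])
  have "\<not> nest_of \<N> j \<subseteq> S"
    using BF_eq BF_eq_BF0_if_nest_subset[OF model S \<open>j \<in> S\<close>]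
      BF0_less_BF_if_nest_cut[OF model A1 S \<open>i \<in> S\<close> cut] by auto
  moreover have "nest_of \<N> i \<in> \<N>" "nest_of \<N> j \<in> \<N>"
    and "nest_of \<N> i \<inter> S \<noteq> {}" "nest_of \<N> j \<inter> S \<noteq> {}"
    using nest_of_mem mem_nest_of NL_model_is_partition[OF model] S \<open>i \<in> S\<close> \<open>j \<in> S\<close> by blast+
  ultimately show "nest_of \<N> i = nest_of \<N> j"
    using sep Mult_eq cut unfolding Mult_separates_cut_nests_def by blast
qed

lemma nest_subset_if_BF_eq_BF0:
  assumes "NL_model n \<N> v lam vN" "assumption1 \<N> lam" "S \<subseteq> items n" "i \<in> S"
    and "BF n \<N> v lam vN i S = BF0 n \<N> v lam vN S"
  shows "nest_of \<N> i \<subseteq> S"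
  using BF0_less_BF_if_nest_cut[OF assms(1-4)] assms(5) by force

lemma same_nest_if_BF_eq_gt_BF0:
  assumes model: "NL_model n \<N> v lam vN" and A1: "assumption1 \<N> lam"
    and sep: "Mult_separates_cut_nests \<N> v lam S"
    and S: "S \<subseteq> items n" and "i \<in> S" "j \<in> S"
    and "BF n \<N> v lam vN i S = BF n \<N> v lam vN j S"
    and "BF n \<N> v lam vN j S > BF0 n \<N> v lam vN S"
  shows "nest_of \<N> i = nest_of \<N> j"
proof -
  have "\<not> nest_of \<N> j \<subseteq> S"
    using BF_eq_BF0_if_nest_subset[OF model S \<open>j \<in> S\<close>] assms(8) by auto
  then show ?thesis
    using same_nest_iff_BF_eq[OF model A1 sep S \<open>j \<in> S\<close> \<open>i \<in> S\<close>] assms(7) by simp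
qed

theorem proposition4p4:
  fixes n b :: nat and \<sigma> :: "nat \<Rightarrow> nat \<Rightarrow> nat" and \<N> :: "nat set set"
    and v :: "nat \<Rightarrow> real" and lam vN :: "nat set \<Rightarrow> real" and S :: "nat set"
  assumes "n \<ge> 2"
    and "valid_design n b \<sigma>"
    and "NL_model n \<N> v lam vN"
    and "assumption1 \<N> lam"
    and "assumption2 n b \<sigma> \<N> v lam"
    and "S \<in> exp_assortments n b \<sigma>"
  shows "(\<forall>i\<in>S. nest_of \<N> i \<subseteq> S \<longrightarrow> BF n \<N> v lam vN i S = BF0 n \<N> v lam vN S)
   \<and> (\<forall>i\<in>S. \<not> nest_of \<N> i \<subseteq> S \<longrightarrow>
         BF n \<N> v lam vN i S > BF0 n \<N> v lam vN S
       \<and> (\<forall>j\<in>S - {i}. nest_of \<N> i = nest_of \<N> j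
             \<longleftrightarrow> BF n \<N> v lam vN i S = BF n \<N> v lam vN j S))
   \<and> (\<forall>i\<in>S. BF n \<N> v lam vN i S = BF0 n \<N> v lam vN S \<longrightarrow>
         (\<forall>k\<in>items n - S. nest_of \<N> i \<noteq> nest_of \<N> k))
   \<and> (\<forall>i\<in>S. \<forall>j\<in>S. BF n \<N> v lam vN i S = BF n \<N> v lam vN j S
         \<and> BF n \<N> v lam vN j S > BF0 n \<N> v lam vN S \<longrightarrow> nest_of \<N> i = nest_of \<N> j)
   \<and> (\<forall>i\<in>S. \<forall>j\<in>S. BF n \<N> v lam vN i S \<noteq> BF n \<N> v lam vN j S
         \<longrightarrow> nest_of \<N> i \<noteq> nest_of \<N> j)"
proof -
  note model = assms(3) and A1 = assms(4)
  obtain l d where "S = S_minus n \<sigma> l d" using assms(6) unfolding exp_assortments_def by blast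
  then have S: "S \<subseteq> items n" unfolding S_minus_def by blast
  have sep: "Mult_separates_cut_nests \<N> v lam S"
    using assumption2_Mult_separates_cut_nests assms(5,6) .
  have own_nest: "\<forall>k\<in>items n. k \<in> nest_of \<N> k"
    using mem_nest_of NL_model_is_partition[OF model] by blast
  show ?thesis
  proof (intro conjI)
    show "\<forall>i\<in>S. nest_of \<N> i \<subseteq> S \<longrightarrow> BF n \<N> v lam vN i S = BF0 n \<N> v lam vN S"
      using BF_eq_BF0_if_nest_subset[OF model S] by blast
    show "\<forall>i\<in>S. \<not> nest_of \<N> i \<subseteq> S \<longrightarrow> BF n \<N> v lam vN i S > BF0 n \<N> v lam vN S
       \<and> (\<forall>j\<in>S - {i}. nest_of \<N> i = nest_of \<N> j
             \<longleftrightarrow> BF n \<N> v lam vN i S = BF n \<N> v lam vN j S)"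
      using BF0_less_BF_if_nest_cut[OF model A1 S] same_nest_iff_BF_eq[OF model A1 sep S] by simp
    show "\<forall>i\<in>S. BF n \<N> v lam vN i S = BF0 n \<N> v lam vN S \<longrightarrow>
        (\<forall>k\<in>items n - S. nest_of \<N> i \<noteq> nest_of \<N> k)"
      using nest_subset_if_BF_eq_BF0[OF model A1 S] own_nest by blast
  qed (use same_nest_if_BF_eq_gt_BF0[OF model A1 sep S]
        BF_eq_Mult_times_BF0[OF model S] in auto)
qed

end
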